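(* Let $G$ be a graph containing no cycle of length 6, let $x\in V(G)$, and let $A$ be a connected component of $G[N_2(x)]$. Then at least one of the following holds: (1) $|V(A)|=1$; (2) $|N(x)\cap N(V(A))|=1$; (3) $A$ is isomorphic to $K_{1,r}$ for some $r\ge 1$.
   Context: All graphs are finite, simple and undirected; "containing no cycle of length 6" means having no subgraph (not necessarily induced) isomorphic to $C_6$. $N_i(S)$ denotes the set of vertices at distance exactly $i$ from the vertex set $S$, $N(S)=N_1(S)$, $N(v)=N(\{v\})$, $N_2(v)=N_2(\{v\})$. *)

theory Defs
  imports Main
begin

definition simple_graph :: "'a set \<Rightarrow> ('a \<Rightarrow> 'a \<Rightarrow> bool) \<Rightarrow> bool" where
  "simple_graph V E \<longleftrightarrow> finite V \<and> (\<forall>u v. E u v \<longrightarrow> E v u)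
     \<and> (\<forall>v. \<not> E v v) \<and> (\<forall>u v. E u v \<longrightarrow> u \<in> V \<and> v \<in> V)"

definition has_C6 :: "'a set \<Rightarrow> ('a \<Rightarrow> 'a \<Rightarrow> bool) \<Rightarrow> bool" where
  "has_C6 V E \<longleftrightarrow> (\<exists>vs. length vs = 6 \<and> distinct vs \<and> set vs \<subseteq> V
     \<and> (\<forall>i<6. E (vs ! i) (vs ! ((i + 1) mod 6))))"

definition nbr :: "'a set \<Rightarrow> ('a \<Rightarrow> 'a \<Rightarrow> bool) \<Rightarrow> 'a \<Rightarrow> 'a set" where
  "nbr V E v = {u \<in> V. E v u}"

definition nbr_set :: "'a set \<Rightarrow> ('a \<Rightarrow> 'a \<Rightarrow> bool) \<Rightarrow> 'a set \<Rightarrow> 'a set" where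
  "nbr_set V E S = {u \<in> V. u \<notin> S \<and> (\<exists>w\<in>S. E w u)}"

definition nbr2 :: "'a set \<Rightarrow> ('a \<Rightarrow> 'a \<Rightarrow> bool) \<Rightarrow> 'a \<Rightarrow> 'a set" where
  "nbr2 V E x = {v \<in> V. v \<noteq> x \<and> \<not> E x v \<and> (\<exists>u. E x u \<and> E u v)}"

definition induced_component :: "'a set \<Rightarrow> ('a \<Rightarrow> 'a \<Rightarrow> bool) \<Rightarrow> 'a set \<Rightarrow> 'a set \<Rightarrow> bool" where
  "induced_component V E S C \<longleftrightarrow> S \<subseteq> V \<and>
     (\<exists>u\<in>S. C = {v. (\<lambda>a b. E a b \<and> a \<in> S \<and> b \<in> S)\<^sup>*\<^sup>* u v})"

definition induced_star :: "'a set \<Rightarrow> ('a \<Rightarrow> 'a \<Rightarrow> bool) \<Rightarrow> 'a set \<Rightarrow> nat \<Rightarrow> bool" where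
  "induced_star V E S r \<longleftrightarrow> finite S \<and> (\<exists>c\<in>S. card (S - {c}) = r \<and>
     (\<forall>u\<in>S. \<forall>v\<in>S. E u v \<longleftrightarrow> ((u = c \<and> v \<noteq> c) \<or> (v = c \<and> u \<noteq> c))))"

end

theory Submission
  imports Defs
begin

(*
  Call an edge ab of A split if a and b have distinct neighbours u, w in N(x). If A has
  no split edge, all its vertices share one neighbour in N(x), so |A| = 1 or
  N(x) \<inter> N(A) is a single vertex. Given a split edge with u ~ a and w ~ b, C6-freeness
  forces every other neighbour of a in A to have w as its only neighbour in N(x), and
  symmetrically. Extra neighbours on both sides, or an edge of A leaving such a neighbour
  other than towards a, then close a 6-cycle through x or through u and w. Hence A is a
  star centred at a or at b.
*)

definition induced_adj :: "('a \<Rightarrow> 'a \<Rightarrow> bool) \<Rightarrow> 'a set \<Rightarrow> 'a \<Rightarrow> 'a \<Rightarrow> bool" where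
  "induced_adj E S a b \<longleftrightarrow> E a b \<and> a \<in> S \<and> b \<in> S"

lemma induced_component_iff:
  "induced_component V E S C \<longleftrightarrow> S \<subseteq> V \<and> (\<exists>u\<in>S. C = {v. (induced_adj E S)\<^sup>*\<^sup>* u v})"
  by (simp add: induced_component_def induced_adj_def[abs_def])

lemma induced_reach_mem:
  assumes "(induced_adj E S)\<^sup>*\<^sup>* a b" "a \<in> S" shows "b \<in> S"
  using assms by (induction rule: rtranclp_induct) (auto simp: induced_adj_def)

lemma has_C6I:
  assumes "distinct [v0, v1, v2, v3, v4, v5]" "{v0, v1, v2, v3, v4, v5} \<subseteq> V"
    and "E v0 v1" "E v1 v2" "E v2 v3" "E v3 v4" "E v4 v5" "E v5 v0"
  shows "has_C6 V E"
  unfolding has_C6_def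
proof (intro exI[of _ "[v0, v1, v2, v3, v4, v5]"] conjI allI impI)
  fix i :: nat
  assume "i < 6"
  then have "i = 0 \<or> i = 1 \<or> i = 2 \<or> i = 3 \<or> i = 4 \<or> i = 5" by auto
  then show "E ([v0, v1, v2, v3, v4, v5] ! i) ([v0, v1, v2, v3, v4, v5] ! ((i + 1) mod 6))"
    using assms by auto
qed (use assms in auto)

locale sgraph =
  fixes V :: "'a set" and E :: "'a \<Rightarrow> 'a \<Rightarrow> bool"
  assumes simple: "simple_graph V E"
begin

lemma adj_sym: "E a b \<Longrightarrow> E b a"
  using simple by (simp add: simple_graph_def)

lemma adj_irrefl: "\<not> E a a"
  using simple by (simp add: simple_graph_def)

lemma edge_in_V: "E a b \<Longrightarrow> a \<in> V" "E a b \<Longrightarrow> b \<in> V"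
  using simple by (simp_all add: simple_graph_def)

lemma finite_V: "finite V"
  using simple by (simp add: simple_graph_def)

lemma induced_adj_sym: "induced_adj E S a b \<Longrightarrow> induced_adj E S b a"
  by (auto simp: induced_adj_def adj_sym)

lemma induced_reach_sym:
  assumes "(induced_adj E S)\<^sup>*\<^sup>* a b" shows "(induced_adj E S)\<^sup>*\<^sup>* b a"
  using assms
proof (induction rule: rtranclp_induct)
  case (step b c)
  then show ?case
    by (meson converse_rtranclp_into_rtranclp induced_adj_sym)
qed simp

lemma induced_component_from:
  assumes "a \<in> {v. (induced_adj E S)\<^sup>*\<^sup>* u v}"
  shows "{v. (induced_adj E S)\<^sup>*\<^sup>* u v} = {v. (induced_adj E S)\<^sup>*\<^sup>* a v}"
  using assms induced_reach_sym rtranclp_trans by fastforce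

lemma induced_component_has_adj:
  assumes "a \<in> {v. (induced_adj E S)\<^sup>*\<^sup>* u v}" "d \<in> {v. (induced_adj E S)\<^sup>*\<^sup>* u v}" "d \<noteq> a"
  obtains b where "induced_adj E S a b"
proof -
  have "(induced_adj E S)\<^sup>*\<^sup>* a d"
    using assms induced_component_from by blast
  then show ?thesis
    using assms(3) that by (cases rule: converse_rtranclpE) auto
qed

end

locale C6_free_graph = sgraph +
  assumes C6_free: "\<not> has_C6 V E"

locale C6_free_rooted = C6_free_graph V E for V :: "'a set" and E +
  fixes x :: 'a
begin

abbreviation N2 :: "'a set" where
  "N2 \<equiv> nbr2 V E x"

abbreviation adj2 :: "'a \<Rightarrow> 'a \<Rightarrow> bool" where
  "adj2 \<equiv> induced_adj E N2"

lemma adj2D: "adj2 a b \<Longrightarrow> E a b \<and> a \<in> V \<and> b \<in> V \<and> a \<noteq> x \<and> b \<noteq> x \<and> \<not> E x a \<and> \<not> E x b"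
  by (auto simp: induced_adj_def nbr2_def)

lemma adj2_parent: "adj2 a b \<Longrightarrow> \<exists>z. E x z \<and> E z b"
  by (simp add: induced_adj_def nbr2_def)

lemma path3_end_parents_eq:
  assumes "adj2 a b" "adj2 b c" "a \<noteq> c" "E x u" "E u a" "E x w" "E w c"
  shows "u = w"
proof (rule ccontr)
  assume "u \<noteq> w"
  then have "has_C6 V E"
    using assms adj2D adj_irrefl edge_in_V adj_sym by (intro has_C6I[of x u a b c w]) auto
  with C6_free show False ..
qed

lemma path4_alternate_parents_eq:
  assumes "adj2 a b" "adj2 b c" "adj2 c d" "a \<noteq> c" "b \<noteq> d" "a \<noteq> d"
    and "E x u" "E u a" "E u c" "E x w" "E w b" "E w d"
  shows "u = w"
proof (rule ccontr)
  assume "u \<noteq> w"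
  then have "has_C6 V E"
    using assms adj2D adj_irrefl edge_in_V adj_sym by (intro has_C6I[of u a b w d c]) auto
  with C6_free show False ..
qed

definition split_edge :: "'a \<Rightarrow> 'a \<Rightarrow> 'a \<Rightarrow> 'a \<Rightarrow> bool" where
  "split_edge a b u w \<longleftrightarrow> adj2 a b \<and> E x u \<and> E u a \<and> E x w \<and> E w b \<and> u \<noteq> w"

lemma split_edge_sym: "split_edge a b u w \<Longrightarrow> split_edge b a w u"
  by (auto simp: split_edge_def induced_adj_sym)

lemma split_edge_one_end_leaf:
  assumes "split_edge a b u w"
  shows "(\<forall>y. adj2 b y \<longrightarrow> y = a) \<or> (\<forall>y. adj2 a y \<longrightarrow> y = b)"
proof (rule ccontr)
  assume "\<not> ?thesis"
  then obtain c d where ac: "adj2 a c" "c \<noteq> b" and bd: "adj2 b d" "d \<noteq> a"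
    by blast
  have ab: "adj2 a b" and u: "E x u" "E u a" and w: "E x w" "E w b" and "u \<noteq> w"
    using assms by (auto simp: split_edge_def)
  obtain z where z: "E x z" "E z c"
    using adj2_parent[OF ac(1)] by blast
  have "z = w"
    using path3_end_parents_eq[OF induced_adj_sym[OF ac(1)] ab ac(2) z w] .
  obtain z' where z': "E x z'" "E z' d"
    using adj2_parent[OF bd(1)] by blast
  have "z' = u"
    using path3_end_parents_eq[OF induced_adj_sym[OF bd(1)] induced_adj_sym[OF ab] bd(2) z' u] .
  show False
  proof (cases "c = d")
    case True
    then have "adj2 c b"
      using bd(1) induced_adj_sym by blast
    moreover have "a \<noteq> b"
      using ab adj_irrefl by (auto simp: induced_adj_def)
    ultimately have "u = w"
      using path3_end_parents_eq[OF ac(1) _ _ u w] by blast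
    with \<open>u \<noteq> w\<close> show False ..
  next
    case False
    have "w = u"
      using path4_alternate_parents_eq[OF induced_adj_sym[OF ac(1)] ab bd(1) ac(2) bd(2)[symmetric] False]
        z z' w u \<open>z = w\<close> \<open>z' = u\<close> by simp
    with \<open>u \<noteq> w\<close> show False by simp
  qed
qed

lemma split_edge_nbr_leaf:
  assumes "split_edge a b u w" and b_leaf: "\<forall>y. adj2 b y \<longrightarrow> y = a"
    and av: "adj2 a v" "v \<noteq> b" and vy: "adj2 v y"
  shows "y = a"
proof (rule ccontr)
  assume "y \<noteq> a"
  have ab: "adj2 a b" and u: "E x u" "E u a" and w: "E x w" "E w b" and "u \<noteq> w"
    using assms by (auto simp: split_edge_def)
  have "y \<noteq> b"
  proof
    assume "y = b"
    then have "v = a"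
      using b_leaf induced_adj_sym[OF vy] by simp
    with av(1) adj_irrefl show False
      by (simp add: induced_adj_def)
  qed
  obtain z where z: "E x z" "E z v"
    using adj2_parent[OF av(1)] by blast
  have "z = w"
    using path3_end_parents_eq[OF induced_adj_sym[OF av(1)] ab av(2) z w] .
  obtain z' where z': "E x z'" "E z' y"
    using adj2_parent[OF vy(1)] by blast
  have "z' = u"
    using path3_end_parents_eq[OF induced_adj_sym[OF vy] induced_adj_sym[OF av(1)] \<open>y \<noteq> a\<close> z' u] .
  have "u = w"
    using path4_alternate_parents_eq[OF induced_adj_sym[OF vy] induced_adj_sym[OF av(1)] ab \<open>y \<noteq> a\<close> av(2) \<open>y \<noteq> b\<close>]
      z z' u w \<open>z = w\<close> \<open>z' = u\<close> by simp
  with \<open>u \<noteq> w\<close> show False ..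
qed

lemma split_edge_leaf_star:
  assumes split: "split_edge a b u w" and b_leaf: "\<forall>y. adj2 b y \<longrightarrow> y = a"
  shows "\<exists>r\<ge>1. induced_star V E {v. adj2\<^sup>*\<^sup>* a v} r"
proof -
  let ?A = "{v. adj2\<^sup>*\<^sup>* a v}"
  have ab: "adj2 a b"
    using split by (simp add: split_edge_def)
  have leaf: "v = a \<or> (adj2 a v \<and> (\<forall>y. adj2 v y \<longrightarrow> y = a))" if "adj2\<^sup>*\<^sup>* a v" for v
    using that
  proof (induction rule: rtranclp_induct)
    case (step v v')
    then show ?case
      using b_leaf split_edge_nbr_leaf[OF split b_leaf] by (cases "v' = b") auto
  qed simp
  have A_N2: "?A \<subseteq> N2"
    using ab induced_reach_mem by (fastforce simp: induced_adj_def)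
  then have fin: "finite ?A"
    using finite_V finite_subset by (fastforce simp: nbr2_def)
  have "b \<in> ?A - {a}"
    using ab adj_irrefl by (auto simp: induced_adj_def)
  then have "card (?A - {a}) \<ge> 1"
    using fin by (metis One_nat_def Suc_leI card_gt_0_iff empty_iff finite_Diff)
  moreover have "E p q \<longleftrightarrow> (p = a \<and> q \<noteq> a) \<or> (q = a \<and> p \<noteq> a)" if "p \<in> ?A" "q \<in> ?A" for p q
    using leaf[of p] leaf[of q] that A_N2 adj_irrefl adj_sym by (auto simp: induced_adj_def)
  ultimately have "induced_star V E ?A (card (?A - {a}))"
    using fin unfolding induced_star_def by blast
  with \<open>card (?A - {a}) \<ge> 1\<close> show ?thesis by blast
qed

lemma split_edge_component_star:
  assumes "split_edge a b u w"
  shows "\<exists>r\<ge>1. induced_star V E {v. adj2\<^sup>*\<^sup>* a v} r"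
  using split_edge_one_end_leaf[OF assms]
proof
  assume "\<forall>y. adj2 b y \<longrightarrow> y = a"
  with assms show ?thesis
    by (rule split_edge_leaf_star)
next
  assume "\<forall>y. adj2 a y \<longrightarrow> y = b"
  with split_edge_sym[OF assms] have "\<exists>r\<ge>1. induced_star V E {v. adj2\<^sup>*\<^sup>* b v} r"
    by (rule split_edge_leaf_star)
  moreover have "{v. adj2\<^sup>*\<^sup>* a v} = {v. adj2\<^sup>*\<^sup>* b v}"
    using assms by (intro induced_component_from) (auto simp: split_edge_def)
  ultimately show ?thesis
    by simp
qed

lemma unsplit_component_common_parent:
  assumes unsplit: "\<And>a b u' w. adj2\<^sup>*\<^sup>* u0 a \<Longrightarrow> \<not> split_edge a b u' w"
    and u: "E x u" "E u u0" and "adj2\<^sup>*\<^sup>* u0 v"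
  shows "E u v"
  using \<open>adj2\<^sup>*\<^sup>* u0 v\<close>
proof (induction rule: rtranclp_induct)
  case (step v v')
  obtain z where z: "E x z" "E z v'"
    using adj2_parent[OF step.hyps(2)] by blast
  with step unsplit[of v v' u z] u(1) show ?case
    by (auto simp: split_edge_def)
qed (rule u(2))

lemma component_has_split_edge:
  assumes u0: "u0 \<in> N2"
    and card_A: "card {v. adj2\<^sup>*\<^sup>* u0 v} \<noteq> 1"
    and card_U: "card (nbr V E x \<inter> nbr_set V E {v. adj2\<^sup>*\<^sup>* u0 v}) \<noteq> 1"
  obtains a b u w where "adj2\<^sup>*\<^sup>* u0 a" "split_edge a b u w"
proof -
  let ?A = "{v. adj2\<^sup>*\<^sup>* u0 v}"
  let ?U = "nbr V E x \<inter> nbr_set V E ?A"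
  have A_N2: "?A \<subseteq> N2"
    using u0 induced_reach_mem by fastforce
  have "u0 \<in> ?A" and "?A \<noteq> {u0}"
    using card_A by auto
  then obtain d where d: "d \<in> ?A" "d \<noteq> u0"
    by blast
  obtain u where u: "E x u" "E u u0"
    using u0 by (auto simp: nbr2_def)
  have "u \<in> ?U"
    using u A_N2 edge_in_V adj_sym by (fastforce simp: nbr_def nbr_set_def nbr2_def)
  moreover have "?U \<noteq> {u}"
    using card_U by auto
  ultimately obtain w where "w \<in> ?U" "w \<noteq> u"
    by blast
  then obtain c where c: "c \<in> ?A" "E x w" "E w c" "w \<noteq> u"
    using adj_sym by (auto simp: nbr_def nbr_set_def)
  show ?thesis
  proof (rule ccontr)
    assume "\<not> ?thesis"
    then have unsplit: "\<And>a b u' w. adj2\<^sup>*\<^sup>* u0 a \<Longrightarrow> \<not> split_edge a b u' w"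
      using that by blast
    have "\<exists>e\<in>?A. e \<noteq> c"
      using d by (cases "c = u0") auto
    then obtain y where y: "adj2 c y"
      using induced_component_has_adj[OF c(1)] by blast
    have "adj2\<^sup>*\<^sup>* u0 y"
      using c(1) y by simp
    then have "split_edge y c u w"
      using unsplit_component_common_parent[OF unsplit u] y c induced_adj_sym u(1)
      by (auto simp: split_edge_def)
    with unsplit \<open>adj2\<^sup>*\<^sup>* u0 y\<close> show False
      by blast
  qed
qed

end

theorem corollary2p6:
  fixes V :: "'a set" and E :: "'a \<Rightarrow> 'a \<Rightarrow> bool" and x :: 'a and A :: "'a set"
  assumes "simple_graph V E"
    and "\<not> has_C6 V E"
    and "x \<in> V"
    and "induced_component V E (nbr2 V E x) A"
  shows "card A = 1 \<or> card (nbr V E x \<inter> nbr_set V E A) = 1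
         \<or> (\<exists>r\<ge>1. induced_star V E A r)"
proof -
  interpret C6_free_rooted V E x
    using assms(1,2) by unfold_locales
  obtain u0 where u0: "u0 \<in> N2" and A: "A = {v. adj2\<^sup>*\<^sup>* u0 v}"
    using assms(4) by (auto simp: induced_component_iff)
  show ?thesis
  proof (cases "card A = 1 \<or> card (nbr V E x \<inter> nbr_set V E A) = 1")
    case False
    then obtain a b u w where "adj2\<^sup>*\<^sup>* u0 a" "split_edge a b u w"
      using component_has_split_edge[OF u0] A by blast
    moreover from this have "A = {v. adj2\<^sup>*\<^sup>* a v}"
      using A induced_component_from by blast
    ultimately show ?thesis
      using split_edge_component_star by blast
  qed blast
qed

end
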